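(* Fix $\gamma \geq 1$ and $0 \leq \rho < 1$. Let $A(u,v) = (u,u+v)$, $\mathbf{1} = (1,1)$, $\mathbf{c} = (\gamma,1)$, and let $T,M:\mathbb{R}^2\to\mathbb{R}^2$ be defined by $$T\mathbf{x} = \begin{cases} A\mathbf{x} + \mathbf{1}, & \langle \mathbf{c},\mathbf{x}\rangle \leq -1/2,\\ A\mathbf{x}, & |\langle \mathbf{c},\mathbf{x}\rangle| < 1/2,\\ A\mathbf{x} - \mathbf{1}, & \langle \mathbf{c},\mathbf{x}\rangle \geq 1/2,\end{cases}\qquad M(u,v) = \begin{cases} T(\rho u,\rho v), & u \geq 0,\\ T(u,v), & u<0.\end{cases}$$ Let $S = S^+\cup S^-$ where $S^+ = \{(u,v) : -1/2 \leq \gamma u + v \leq 1/2 + \gamma,\ 0 \leq u < 1\}$ and $S^- = \{(u,v) : -(1/2+\gamma) \leq \gamma u + v \leq 1/2,\ -1 \leq u < 0\}$. Suppose $(u_0,v_0) \in S$ and let $(u_n,v_n) = M^n(u_0,v_0)$. Let $\mathcal{I}^+ = \{n \geq 0 : u_n \geq 0\}$. Then the subsequence $(u_n)_{n\in\mathcal{I}^+}$ converges to zero as $n\to\infty$.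
   Context: $\langle\cdot,\cdot\rangle$ is the standard inner product on $\mathbb{R}^2$. *)

theory Defs
  imports "HOL-Analysis.Analysis"
begin

definition Amap :: "real \<times> real \<Rightarrow> real \<times> real" where
  "Amap x = (fst x, fst x + snd x)"

definition one2 :: "real \<times> real" where
  "one2 = (1, 1)"

definition cvec :: "real \<Rightarrow> real \<times> real" where
  "cvec \<gamma> = (\<gamma>, 1)"

definition Tmap :: "real \<Rightarrow> real \<times> real \<Rightarrow> real \<times> real" where
  "Tmap \<gamma> x =
     (if cvec \<gamma> \<bullet> x \<le> -1/2 then Amap x + one2
      else if \<bar>cvec \<gamma> \<bullet> x\<bar> < 1/2 then Amap x
      else Amap x - one2)"

definition Mmap :: "real \<Rightarrow> real \<Rightarrow> real \<times> real \<Rightarrow> real \<times> real" where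
  "Mmap \<gamma> \<rho> x =
     (if fst x \<ge> 0 then Tmap \<gamma> (\<rho> *\<^sub>R x) else Tmap \<gamma> x)"

definition Splus :: "real \<Rightarrow> (real \<times> real) set" where
  "Splus \<gamma> = {(u, v). -1/2 \<le> \<gamma> * u + v \<and> \<gamma> * u + v \<le> 1/2 + \<gamma> \<and> 0 \<le> u \<and> u < 1}"

definition Sminus :: "real \<Rightarrow> (real \<times> real) set" where
  "Sminus \<gamma> = {(u, v). -(1/2 + \<gamma>) \<le> \<gamma> * u + v \<and> \<gamma> * u + v \<le> 1/2 \<and> -1 \<le> u \<and> u < 0}"

definition Sset :: "real \<Rightarrow> (real \<times> real) set" where
  "Sset \<gamma> = Splus \<gamma> \<union> Sminus \<gamma>"

end

theory Submission
  imports Defs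
begin

text \<open>In the coordinates \<open>u = fst x\<close>, \<open>w = \<langle>c, x\<rangle>\<close> the map \<open>T\<close> shifts \<open>u\<close> by an integer, and
  \<open>M\<close> first scales \<open>(u, w)\<close> by \<open>\<rho>\<close> when \<open>u \<ge> 0\<close>. On the region obtained from \<open>S\<close> by removing
  the edge \<open>w = 1/2\<close> of \<open>S\<^sup>-\<close>, which is forward invariant, \<open>u \<in> [-1, 1)\<close>; hence \<open>frac u\<close> equals
  \<open>u\<close> at the indices in \<open>I\<^sup>+\<close>, is multiplied by \<open>\<rho>\<close> at those indices and is unchanged at
  the others. A nonincreasing sequence that is contracted by \<open>\<rho>\<close> infinitely often tends to
  zero. Points on the removed edge enter the region within five steps.\<close>

lemma eventually_small_at_contraction_steps:
  fixes r :: "nat \<Rightarrow> real"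
  assumes "0 \<le> \<rho>" "\<rho> < 1" and nonneg: "\<And>n. 0 \<le> r n"
    and step: "\<And>n. r (Suc n) = (if P n then \<rho> * r n else r n)"
    and "\<epsilon> > 0"
  shows "\<forall>\<^sub>F n in sequentially. P n \<longrightarrow> r n < \<epsilon>"
proof -
  have "decseq r"
    using step nonneg assms(1,2) by (intro decseq_SucI) (simp add: mult_left_le_one_le)
  then obtain L where lim: "r \<longlonglongrightarrow> L" and "\<forall>i. L \<le> r i"
    using nonneg decseq_convergent by blast
  then have "0 \<le> L"
    using nonneg LIMSEQ_le_const by blast
  show ?thesis
  proof (cases "L = 0")
    case True
    then show ?thesis
      using order_tendstoD(2)[OF lim, of \<epsilon>] \<open>\<epsilon> > 0\<close> by (auto elim: eventually_mono)
  next
    case False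
    define c where "c = (1 + \<rho>) / 2 * L"
    have "\<rho> * L < c" "c < L"
      using False \<open>0 \<le> L\<close> \<open>\<rho> < 1\<close> by (simp_all add: c_def field_simps)
    moreover have "(\<lambda>n. r (Suc n)) \<longlonglongrightarrow> L" "(\<lambda>n. \<rho> * r n) \<longlonglongrightarrow> \<rho> * L"
      using lim by (auto intro: LIMSEQ_Suc tendsto_mult_left)
    ultimately have "\<forall>\<^sub>F n in sequentially. c < r (Suc n) \<and> \<rho> * r n < c"
      by (auto intro: eventually_conj order_tendstoD)
    then show ?thesis
      by eventually_elim (use step in \<open>auto split: if_splits\<close>)
  qed
qed

lemma ex_funpow_mem_shift: "(f ^^ N) ((f ^^ k) x) \<in> A \<Longrightarrow> \<exists>N. (f ^^ N) x \<in> A"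
  by (metis comp_apply funpow_add)

lemma Tmap_low:
  "cvec \<gamma> \<bullet> x \<le> -1/2 \<Longrightarrow>
     fst (Tmap \<gamma> x) = fst x + 1 \<and> cvec \<gamma> \<bullet> Tmap \<gamma> x = cvec \<gamma> \<bullet> x + fst x + \<gamma> + 1"
  by (cases x) (simp add: Tmap_def Amap_def one2_def cvec_def algebra_simps)

lemma Tmap_mid:
  "\<bar>cvec \<gamma> \<bullet> x\<bar> < 1/2 \<Longrightarrow>
     fst (Tmap \<gamma> x) = fst x \<and> cvec \<gamma> \<bullet> Tmap \<gamma> x = cvec \<gamma> \<bullet> x + fst x"
  by (cases x) (auto simp add: Tmap_def Amap_def one2_def cvec_def algebra_simps)

lemma Tmap_high:
  "cvec \<gamma> \<bullet> x \<ge> 1/2 \<Longrightarrow>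
     fst (Tmap \<gamma> x) = fst x - 1 \<and> cvec \<gamma> \<bullet> Tmap \<gamma> x = cvec \<gamma> \<bullet> x + fst x - \<gamma> - 1"
  by (cases x) (auto simp add: Tmap_def Amap_def one2_def cvec_def algebra_simps)

lemma frac_fst_Tmap: "frac (fst (Tmap \<gamma> x)) = frac (fst x)"
  by (auto simp: Tmap_def Amap_def one2_def frac_1_eq
      simp flip: frac_add_of_int_right[of "fst x - 1" 1])

lemma Mmap_nonneg: "0 \<le> fst x \<Longrightarrow> Mmap \<gamma> \<rho> x = Tmap \<gamma> (\<rho> *\<^sub>R x)"
  by (simp add: Mmap_def)

lemma Mmap_neg: "fst x < 0 \<Longrightarrow> Mmap \<gamma> \<rho> x = Tmap \<gamma> x"
  by (simp add: Mmap_def)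

definition trap_region :: "real \<Rightarrow> (real \<times> real) set" where
  "trap_region \<gamma> = {x. (0 \<le> fst x \<and> fst x < 1 \<and> -1/2 \<le> cvec \<gamma> \<bullet> x \<and> cvec \<gamma> \<bullet> x \<le> 1/2 + \<gamma>)
              \<or> (-1 \<le> fst x \<and> fst x < 0 \<and> -(1/2 + \<gamma>) \<le> cvec \<gamma> \<bullet> x \<and> cvec \<gamma> \<bullet> x < 1/2)}"

lemma Mmap_trap_region:
  assumes "1 \<le> \<gamma>" "0 \<le> \<rho>" "\<rho> < 1" and x: "x \<in> trap_region \<gamma>"
  shows "Mmap \<gamma> \<rho> x \<in> trap_region \<gamma>"
proof (cases "0 \<le> fst x")
  case True
  define y where "y = \<rho> *\<^sub>R x"
  have "\<rho> * fst x \<le> fst x"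
    using True assms by (simp add: mult_left_le_one_le)
  then have u: "0 \<le> fst y" "fst y < 1"
    using True x assms by (auto simp: y_def trap_region_def)
  have "-1/2 \<le> cvec \<gamma> \<bullet> x" "cvec \<gamma> \<bullet> x \<le> 1/2 + \<gamma>"
    using True x by (auto simp: trap_region_def)
  then have "\<rho> * (-1/2) \<le> \<rho> * (cvec \<gamma> \<bullet> x)" "\<rho> * (cvec \<gamma> \<bullet> x) \<le> \<rho> * (1/2 + \<gamma>)"
    using assms(2) by (blast intro: mult_left_mono)+
  then have w: "-1/2 < cvec \<gamma> \<bullet> y" "cvec \<gamma> \<bullet> y \<le> \<rho> * (1/2 + \<gamma>)"
    using assms(3) by (auto simp: y_def)
  have "\<rho> * \<gamma> \<le> \<gamma>"
    using assms by (simp add: mult_left_le_one_le)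
  then have "\<rho> * (1/2 + \<gamma>) + fst y - \<gamma> - 1 < 1/2"
    using u assms(3) by (simp add: distrib_left)
  then show ?thesis
    using Tmap_mid[of \<gamma> y] Tmap_high[of \<gamma> y] u w assms(1) True
    by (cases "cvec \<gamma> \<bullet> y < 1/2") (simp_all add: Mmap_nonneg y_def trap_region_def)
next
  case False
  then have u: "-1 \<le> fst x" "fst x < 0" and w: "-(1/2 + \<gamma>) \<le> cvec \<gamma> \<bullet> x" "cvec \<gamma> \<bullet> x < 1/2"
    using x by (auto simp: trap_region_def)
  show ?thesis
  proof (cases "cvec \<gamma> \<bullet> x \<le> -1/2")
    case True
    then show ?thesis
      using Tmap_low[of \<gamma> x] u w by (simp add: Mmap_neg trap_region_def)
  next
    case False
    then have "\<bar>cvec \<gamma> \<bullet> x\<bar> < 1/2"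
      using w by simp
    then show ?thesis
      using Tmap_mid[of \<gamma> x] u w False assms(1) by (simp add: Mmap_neg trap_region_def)
  qed
qed

lemma funpow_Mmap_trap_region:
  "1 \<le> \<gamma> \<Longrightarrow> 0 \<le> \<rho> \<Longrightarrow> \<rho> < 1 \<Longrightarrow> x \<in> trap_region \<gamma> \<Longrightarrow> (Mmap \<gamma> \<rho> ^^ n) x \<in> trap_region \<gamma>"
  by (induction n) (simp_all add: Mmap_trap_region)

lemma frac_fst_Mmap:
  assumes "0 \<le> \<rho>" "\<rho> < 1" "fst x < 1"
  shows "frac (fst (Mmap \<gamma> \<rho> x)) = (if 0 \<le> fst x then \<rho> * frac (fst x) else frac (fst x))"
proof (cases "0 \<le> fst x")
  case True
  have "\<rho> * fst x \<le> fst x"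
    using True assms(1,2) by (simp add: mult_left_le_one_le)
  then show ?thesis
    using True assms by (simp add: Mmap_nonneg frac_fst_Tmap frac_eq)
qed (simp add: Mmap_neg frac_fst_Tmap)

lemma trap_region_orbit_nonneg_small:
  assumes "1 \<le> \<gamma>" "0 \<le> \<rho>" "\<rho> < 1" "x \<in> trap_region \<gamma>" "\<epsilon> > 0"
  shows "\<forall>\<^sub>F n in sequentially.
           0 \<le> fst ((Mmap \<gamma> \<rho> ^^ n) x) \<longrightarrow> \<bar>fst ((Mmap \<gamma> \<rho> ^^ n) x)\<bar> < \<epsilon>"
proof -
  define u where "u n = fst ((Mmap \<gamma> \<rho> ^^ n) x)" for n
  have u_bound: "u n < 1" for n
    using funpow_Mmap_trap_region[OF assms(1-4), of n] by (auto simp: u_def trap_region_def)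
  have "frac (u (Suc n)) = (if 0 \<le> u n then \<rho> * frac (u n) else frac (u n))" for n
    using frac_fst_Mmap[OF assms(2,3)] u_bound by (simp add: u_def)
  then have "\<forall>\<^sub>F n in sequentially. 0 \<le> u n \<longrightarrow> frac (u n) < \<epsilon>"
    using assms(2,3,5) by (intro eventually_small_at_contraction_steps[of \<rho> "\<lambda>n. frac (u n)"]) auto
  then show ?thesis
    by eventually_elim (use u_bound in \<open>simp add: u_def frac_eq\<close>)
qed

text \<open>The points on the line \<open>\<langle>c, x\<rangle> = 3 u + \<gamma> - 5/2\<close> treated below arise as third iterates
  of points on the removed edge. When \<open>M\<close> pushes such a point out of the region, the image
  \<open>z\<close> overshoots to \<open>u \<ge> 1\<close>, and one more step brings it back.\<close>

lemma Mmap_overshoot_trap_region: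
  assumes \<gamma>: "1 \<le> \<gamma>" and \<rho>: "0 \<le> \<rho>" "\<rho> < 1"
    and q: "0 \<le> q" "q \<le> \<rho>" "q < 1/2"
    and z: "fst z = q + 1" and z_w: "cvec \<gamma> \<bullet> z = 4 * q + \<rho> * \<gamma> - 5/2 * \<rho> + \<gamma> + 1"
    and z_le: "cvec \<gamma> \<bullet> z \<le> q + \<gamma> + 1/2"
  shows "Mmap \<gamma> \<rho> z \<in> trap_region \<gamma>"
proof -
  define s where "s = \<rho> * (q + 1)"
  define Y where "Y = \<rho> * (cvec \<gamma> \<bullet> z)"
  have "\<rho> * 1 \<le> \<rho> * \<gamma>"
    using \<gamma> \<rho>(1) by (rule mult_left_mono)
  then have \<rho>\<gamma>: "\<rho> \<le> \<rho> * \<gamma>" "\<rho> * \<gamma> \<le> \<gamma>" "\<rho> * \<rho> \<le> \<rho> * (\<rho> * \<gamma>)" "\<rho> * \<rho> \<le> \<rho>"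
    using \<gamma> \<rho> by (simp_all add: mult_left_le_one_le mult_left_mono)
  have "1 - \<rho> \<le> \<gamma> - \<rho> * \<gamma>"
    using \<gamma> \<rho> mult_right_mono[of 1 \<gamma> "1 - \<rho>"] by (simp add: algebra_simps)
  have Y: "Y = 4 * (\<rho> * q) + \<rho> * (\<rho> * \<gamma>) - 5/2 * (\<rho> * \<rho>) + \<rho> * \<gamma> + \<rho>"
    unfolding Y_def z_w by (simp add: algebra_simps)
  have Y_le: "Y \<le> \<rho> * q + \<rho> * \<gamma> + \<rho> / 2"
    using mult_left_mono[OF z_le \<rho>(1)] by (simp add: Y_def algebra_simps)
  have \<rho>q: "0 \<le> \<rho> * q" "\<rho> * q \<le> \<rho> * \<rho>" "\<rho> * q \<le> q"
    using q \<rho> by (simp_all add: mult_left_mono mult_left_le_one_le)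
  have s: "s = \<rho> * q + \<rho>" "0 \<le> s"
    using q \<rho> by (simp_all add: s_def algebra_simps)
  have Mz: "Mmap \<gamma> \<rho> z = Tmap \<gamma> (\<rho> *\<^sub>R z)" "fst (\<rho> *\<^sub>R z) = s" "cvec \<gamma> \<bullet> (\<rho> *\<^sub>R z) = Y"
    using z q by (simp_all add: Mmap_nonneg s_def Y_def)
  show ?thesis
  proof (cases "Y < 1/2")
    case True
    have "0 \<le> cvec \<gamma> \<bullet> z"
      using z_w q \<gamma> \<rho> \<rho>\<gamma> by linarith
    then have "0 \<le> Y"
      using \<rho> by (simp add: Y_def)
    moreover have "s < 1"
      using True Y \<rho>\<gamma> \<rho>q s \<rho> by linarith
    ultimately show ?thesis
      using Tmap_mid[of \<gamma> "\<rho> *\<^sub>R z"] Mz True s \<gamma> by (simp add: trap_region_def)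
  next
    case False
    then have Mz': "fst (Mmap \<gamma> \<rho> z) = s - 1" "cvec \<gamma> \<bullet> Mmap \<gamma> \<rho> z = Y + s - \<gamma> - 1"
      using Tmap_high[of \<gamma> "\<rho> *\<^sub>R z"] Mz by simp_all
    show ?thesis
    proof (cases "s < 1")
      case True
      have "-1 \<le> s - 1" "s - 1 < 0" "-(1/2 + \<gamma>) \<le> Y + s - \<gamma> - 1" "Y + s - \<gamma> - 1 < 1/2"
        using True False s Y_le \<rho> \<rho>\<gamma> \<rho>q \<open>1 - \<rho> \<le> \<gamma> - \<rho> * \<gamma>\<close> by linarith+
      then show ?thesis
        using Mz' by (simp add: trap_region_def)
    next
      case s_ge: False
      \<comment> \<open>\<open>s \<ge> 1\<close> and \<open>q \<le> \<rho>\<close> force \<open>\<rho>\<^sup>2 + \<rho> \<ge> 1\<close>\<close>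
      have "0 \<le> (\<gamma> - 1) * (\<rho> * \<rho> + \<rho> - 1)"
        using s_ge s \<rho>q \<gamma> by simp
      then have "\<rho> * \<rho> + \<rho> - 1 \<le> \<rho> * (\<rho> * \<gamma>) + \<rho> * \<gamma> - \<gamma>"
        by (simp add: algebra_simps)
      then have "0 \<le> s - 1" "s - 1 < 1" "-1/2 \<le> Y + s - \<gamma> - 1" "Y + s - \<gamma> - 1 \<le> 1/2 + \<gamma>"
        using s_ge s q Y Y_le \<gamma> \<rho> \<rho>\<gamma> \<rho>q by linarith+
      then show ?thesis
        using Mz' by (simp add: trap_region_def)
    qed
  qed
qed

lemma Mmap_Mmap_trap_region:
  assumes \<gamma>: "1 \<le> \<gamma>" and \<rho>: "0 \<le> \<rho>" "\<rho> < 1"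
    and p: "0 \<le> fst x" and w: "cvec \<gamma> \<bullet> x = 3 * fst x + \<gamma> - 5/2"
    and low: "\<rho> * (cvec \<gamma> \<bullet> x) \<le> -1/2"
  shows "Mmap \<gamma> \<rho> (Mmap \<gamma> \<rho> x) \<in> trap_region \<gamma>"
proof -
  define q where "q = \<rho> * fst x"
  have "cvec \<gamma> \<bullet> x < 0"
    using low mult_nonneg_nonneg[OF \<rho>(1), of "cvec \<gamma> \<bullet> x"] by linarith
  then have "fst x < 1/2"
    using w \<gamma> by linarith
  moreover have "q \<le> fst x" "q \<le> \<rho>"
    using p \<open>fst x < 1/2\<close> \<rho> by (simp_all add: q_def mult_left_le_one_le mult_left_le)
  ultimately have q: "0 \<le> q" "q \<le> \<rho>" "q < 1/2"
    using p \<rho> by (simp_all add: q_def)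
  have "cvec \<gamma> \<bullet> (\<rho> *\<^sub>R x) \<le> -1/2"
    using low by simp
  then have z: "fst (Mmap \<gamma> \<rho> x) = q + 1"
    and z_eq: "cvec \<gamma> \<bullet> Mmap \<gamma> \<rho> x = \<rho> * (cvec \<gamma> \<bullet> x) + q + \<gamma> + 1"
    using Tmap_low[of \<gamma> "\<rho> *\<^sub>R x"] p by (simp_all add: q_def Mmap_nonneg)
  moreover have "\<rho> * (cvec \<gamma> \<bullet> x) + q + \<gamma> + 1 = 4 * q + \<rho> * \<gamma> - 5/2 * \<rho> + \<gamma> + 1"
    unfolding w q_def by (simp add: algebra_simps)
  ultimately show ?thesis
    using Mmap_overshoot_trap_region[OF \<gamma> \<rho> q] low by simp
qed

lemma enters_trap_region_on_line:
  assumes \<gamma>: "1 \<le> \<gamma>" and \<rho>: "0 \<le> \<rho>" "\<rho> < 1"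
    and p: "0 \<le> fst x" "fst x < 1" and w: "cvec \<gamma> \<bullet> x = 3 * fst x + \<gamma> - 5/2"
  shows "\<exists>N. (Mmap \<gamma> \<rho> ^^ N) x \<in> trap_region \<gamma>"
proof (cases "-1/2 \<le> cvec \<gamma> \<bullet> x")
  case True
  then have "x \<in> trap_region \<gamma>"
    using p w by (simp add: trap_region_def)
  then show ?thesis
    by (metis funpow_0)
next
  case False
  show ?thesis
  proof (cases "\<rho> * (cvec \<gamma> \<bullet> x) \<le> -1/2")
    case True
    then show ?thesis
      using Mmap_Mmap_trap_region[OF assms(1-4) w] by (metis funpow_0 funpow_Suc_right comp_apply)
  next
    case high: False
    have "0 \<le> \<rho> * fst x" "\<rho> * fst x \<le> fst x" "\<rho> * (cvec \<gamma> \<bullet> x) \<le> 0"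
      using p \<rho> False by (simp_all add: mult_left_le_one_le mult_nonneg_nonpos)
    moreover have "fst (Mmap \<gamma> \<rho> x) = \<rho> * fst x"
      "cvec \<gamma> \<bullet> Mmap \<gamma> \<rho> x = \<rho> * (cvec \<gamma> \<bullet> x) + \<rho> * fst x"
      using Tmap_mid[of \<gamma> "\<rho> *\<^sub>R x"] p high calculation(3) by (simp_all add: Mmap_nonneg)
    ultimately have "Mmap \<gamma> \<rho> x \<in> trap_region \<gamma>"
      unfolding trap_region_def mem_Collect_eq using p high \<gamma> by (intro disjI1) linarith
    then show ?thesis
      by (metis funpow_0 funpow_Suc_right comp_apply)
  qed
qed

lemma enters_trap_region_from_edge:
  assumes \<gamma>: "1 \<le> \<gamma>" and \<rho>: "0 \<le> \<rho>" "\<rho> < 1"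
    and u: "-1 \<le> fst x" "fst x < 0" and w: "cvec \<gamma> \<bullet> x = 1/2"
  shows "\<exists>N. (Mmap \<gamma> \<rho> ^^ N) x \<in> trap_region \<gamma>"
proof -
  define x2 where "x2 = (Mmap \<gamma> \<rho> ^^ 2) x"
  have "fst (Mmap \<gamma> \<rho> x) = fst x - 1" "cvec \<gamma> \<bullet> Mmap \<gamma> \<rho> x = fst x - \<gamma> - 1/2"
    using Tmap_high[of \<gamma> x] u w by (simp_all add: Mmap_neg)
  then have x2: "fst x2 = fst x" "cvec \<gamma> \<bullet> x2 = 2 * fst x - 1/2"
    using Tmap_low[of \<gamma> "Mmap \<gamma> \<rho> x"] u \<gamma> by (simp_all add: x2_def numeral_2_eq_2 Mmap_neg)
  show ?thesis
  proof (cases "-\<gamma> \<le> 2 * fst x")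
    case True
    then have "x2 \<in> trap_region \<gamma>"
      using x2 u by (simp add: trap_region_def)
    then show ?thesis
      unfolding x2_def by blast
  next
    case False
    have x3: "fst (Mmap \<gamma> \<rho> x2) = fst x + 1" "cvec \<gamma> \<bullet> Mmap \<gamma> \<rho> x2 = 3 * (fst x + 1) + \<gamma> - 5/2"
      using Tmap_low[of \<gamma> x2] x2 u \<gamma> False by (simp_all add: Mmap_neg)
    have "Mmap \<gamma> \<rho> x2 = (Mmap \<gamma> \<rho> ^^ 3) x"
      by (simp add: x2_def numeral_3_eq_3 numeral_2_eq_2)
    then show ?thesis
      using enters_trap_region_on_line[OF \<gamma> \<rho>, of "Mmap \<gamma> \<rho> x2"] x3 u False
      by (auto intro: ex_funpow_mem_shift)
  qed
qed

lemma Sset_enters_trap_region: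
  assumes "1 \<le> \<gamma>" "0 \<le> \<rho>" "\<rho> < 1" "x \<in> Sset \<gamma>"
  shows "\<exists>N. (Mmap \<gamma> \<rho> ^^ N) x \<in> trap_region \<gamma>"
proof (cases "x \<in> trap_region \<gamma>")
  case True
  then show ?thesis
    by (metis funpow_0)
next
  case False
  then have "-1 \<le> fst x" "fst x < 0" "cvec \<gamma> \<bullet> x = 1/2"
    using assms(4) by (auto simp: Sset_def Splus_def Sminus_def trap_region_def cvec_def)
  then show ?thesis
    using enters_trap_region_from_edge assms(1-3) by blast
qed

theorem lemma1:
  fixes \<gamma> \<rho> u0 v0 :: real
  assumes "\<gamma> \<ge> 1" and "0 \<le> \<rho>" and "\<rho> < 1"
    and "(u0, v0) \<in> Sset \<gamma>"
  shows "\<forall>\<epsilon>>0. \<exists>N. \<forall>n\<ge>N.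
           fst ((Mmap \<gamma> \<rho> ^^ n) (u0, v0)) \<ge> 0 \<longrightarrow>
           \<bar>fst ((Mmap \<gamma> \<rho> ^^ n) (u0, v0))\<bar> < \<epsilon>"
proof (intro allI impI)
  fix \<epsilon> :: real
  assume "\<epsilon> > 0"
  obtain k where "(Mmap \<gamma> \<rho> ^^ k) (u0, v0) \<in> trap_region \<gamma>"
    using Sset_enters_trap_region assms by blast
  from trap_region_orbit_nonneg_small[OF assms(1-3) this \<open>\<epsilon> > 0\<close>]
  have "\<forall>\<^sub>F n in sequentially. 0 \<le> fst ((Mmap \<gamma> \<rho> ^^ (n + k)) (u0, v0)) \<longrightarrow>
          \<bar>fst ((Mmap \<gamma> \<rho> ^^ (n + k)) (u0, v0))\<bar> < \<epsilon>"
    by (simp add: funpow_add)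
  then have "\<forall>\<^sub>F n in sequentially. 0 \<le> fst ((Mmap \<gamma> \<rho> ^^ n) (u0, v0)) \<longrightarrow>
               \<bar>fst ((Mmap \<gamma> \<rho> ^^ n) (u0, v0))\<bar> < \<epsilon>"
    by (rule eventually_sequentially_seg[THEN iffD1])
  then show "\<exists>N. \<forall>n\<ge>N. 0 \<le> fst ((Mmap \<gamma> \<rho> ^^ n) (u0, v0)) \<longrightarrow>
               \<bar>fst ((Mmap \<gamma> \<rho> ^^ n) (u0, v0))\<bar> < \<epsilon>"
    unfolding eventually_sequentially .
qed

end
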